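(* Let $m\ge 0$ be an integer. Any two singly even self-dual $[24m+10,12m+5,4m+2]$ codes with minimal shadow have the same weight enumerator; that is, the weight enumerator of a singly even self-dual $[24m+10,12m+5,4m+2]$ code with minimal shadow is uniquely determined by $m$.
   Context: A binary code of length $n$ is a subspace of $\mathbb{F}_2^n$; $C^\perp$ is its dual with respect to the standard inner product, and $C$ is self-dual if $C=C^\perp$. A self-dual code is singly even if it contains a codeword of weight $\equiv 2 \pmod 4$. For a singly even self-dual code $C$, let $C_0$ be the subcode of codewords of weight $\equiv 0\pmod 4$; the shadow of $C$ is $S=C_0^\perp\setminus C$. For $n\equiv 2\pmod 8$, $C$ is said to have minimal shadow if the minimum weight of $S$ equals $1$. An $[n,k,d]$ code is a code of length $n$, dimension $k$ and minimum weight $d$. The weight enumerator of $C$ is $\sum_{x\in C} y^{\mathrm{wt}(x)}$. *)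

theory Defs
  imports Main
begin

text \<open>Binary words of length n are represented by their supports:
  a word x in F_2^n is the set of coordinates i < n where x_i = 1.
  Addition in F_2^n is symmetric difference, the weight is card,
  and the standard inner product of x and y is card (x \<inter> y) mod 2.\<close>

definition words :: "nat \<Rightarrow> nat set set" where
  "words n = Pow {..<n}"

definition wt :: "nat set \<Rightarrow> nat" where
  "wt x = card x"

definition vadd :: "nat set \<Rightarrow> nat set \<Rightarrow> nat set" where
  "vadd x y = (x - y) \<union> (y - x)"

definition orth :: "nat set \<Rightarrow> nat set \<Rightarrow> bool" where
  "orth x y \<longleftrightarrow> even (card (x \<inter> y))"

definition linear_code :: "nat \<Rightarrow> nat set set \<Rightarrow> bool" where
  "linear_code n C \<longleftrightarrow> C \<subseteq> words n \<and> {} \<in> C \<and> (\<forall>x\<in>C. \<forall>y\<in>C. vadd x y \<in> C)"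

definition dual_code :: "nat \<Rightarrow> nat set set \<Rightarrow> nat set set" where
  "dual_code n C = {x \<in> words n. \<forall>y\<in>C. orth x y}"

definition self_dual :: "nat \<Rightarrow> nat set set \<Rightarrow> bool" where
  "self_dual n C \<longleftrightarrow> linear_code n C \<and> C = dual_code n C"

definition singly_even :: "nat set set \<Rightarrow> bool" where
  "singly_even C \<longleftrightarrow> (\<exists>c\<in>C. wt c mod 4 = 2)"

definition doubly_even_subcode :: "nat set set \<Rightarrow> nat set set" where
  "doubly_even_subcode C = {c \<in> C. wt c mod 4 = 0}"

definition shadow :: "nat \<Rightarrow> nat set set \<Rightarrow> nat set set" where
  "shadow n C = dual_code n (doubly_even_subcode C) - C"

definition code_dim :: "nat set set \<Rightarrow> nat \<Rightarrow> bool" where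
  "code_dim C k \<longleftrightarrow> card C = 2 ^ k"

definition min_weight :: "nat set set \<Rightarrow> nat" where
  "min_weight C = Min (wt ` (C - {{}}))"

definition min_wt_set :: "nat set set \<Rightarrow> nat" where
  "min_wt_set S = Min (wt ` S)"

definition minimal_shadow :: "nat \<Rightarrow> nat set set \<Rightarrow> bool" where
  "minimal_shadow n C \<longleftrightarrow> shadow n C \<noteq> {} \<and> min_wt_set (shadow n C) = 1"

definition is_nkd_code :: "nat \<Rightarrow> nat \<Rightarrow> nat \<Rightarrow> nat set set \<Rightarrow> bool" where
  "is_nkd_code n k d C \<longleftrightarrow> linear_code n C \<and> code_dim C k \<and> C \<noteq> {{}} \<and> min_weight C = d"

text \<open>Weight enumerator sum_{x in C} y^{wt x}, represented by its
  coefficient sequence: coefficient of y^i is the number of codewords of weight i.\<close>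
definition weight_enum :: "nat set set \<Rightarrow> nat \<Rightarrow> nat" where
  "weight_enum C i = card {c \<in> C. wt c = i}"

end

(* If the shadow contains the weight-one word {i}, a codeword is doubly even exactly when it
   avoids i. As the all-ones word is a codeword, complementation then gives
   W_C(w) = W_0(w) + W_0(n - w) for the weight enumerator W_0 of the doubly even subcode, and
   the minimum weight confines W_0 to 0 and the 4m+2 weights 4m+4, 4m+8, ..., 20m+8.
   Counting, for every (mu+1)-set T through i and mu <= 4m+1, the codewords disjoint from T by
   the MacWilliams identity yields 4m+2 linear equations in these unknowns, whose matrix is a
   binomial Vandermonde matrix perturbed in a single entry; it is nonsingular, so W_0 and
   hence W_C depend on m only. *)

theory Submission
  imports Defs Complex_Main
begin

lemma finite_words: "finite (words n)"
  unfolding words_def by simp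

lemma finite_word: "x \<in> words n \<Longrightarrow> finite x"
  unfolding words_def using finite_subset by auto

lemma card_vadd:
  assumes "finite a" "finite b"
  shows "card (vadd a b) + 2 * card (a \<inter> b) = card a + card b"
proof -
  have "card (vadd a b) = card (a - b) + card (b - a)"
    unfolding vadd_def using assms by (intro card_Un_disjoint) auto
  moreover have "card a = card (a \<inter> b) + card (a - b)" "card b = card (b \<inter> a) + card (b - a)"
    using assms by (simp_all add: card_Int_Diff)
  ultimately show ?thesis by (simp add: Int_commute)
qed

lemma parity_vadd:
  assumes "finite a" "finite b"
  shows "(-1::int) ^ card (x \<inter> vadd a b) = (-1) ^ card (x \<inter> a) * (-1) ^ card (x \<inter> b)"
proof -
  have "x \<inter> vadd a b = vadd (x \<inter> a) (x \<inter> b)"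
    unfolding vadd_def by auto
  then have "card (x \<inter> vadd a b) + 2 * card (x \<inter> a \<inter> (x \<inter> b)) = card (x \<inter> a) + card (x \<inter> b)"
    using card_vadd[of "x \<inter> a" "x \<inter> b"] assms by simp
  then have "(-1::int) ^ (card (x \<inter> vadd a b) + 2 * card (x \<inter> a \<inter> (x \<inter> b))) =
      (-1) ^ (card (x \<inter> a) + card (x \<inter> b))"
    by simp
  then show ?thesis by (simp add: power_add power_mult)
qed

lemma sum_sign_reversing_involution:
  fixes h :: "'b \<Rightarrow> int"
  assumes "bij_betw g A A" and "\<And>x. x \<in> A \<Longrightarrow> h (g x) = - h x"
  shows "sum h A = 0"
proof -
  have "sum h A = sum (h \<circ> g) A"
    using sum.reindex_bij_betw[OF assms(1), of h] by simp
  also have "\<dots> = - sum h A"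
    using assms(2) by (simp add: sum_negf)
  finally show ?thesis by simp
qed

lemma involution_bij_betw:
  assumes "\<And>x. x \<in> A \<Longrightarrow> g x \<in> A" and "\<And>x. g (g x) = x"
  shows "bij_betw g A A"
  by (rule bij_betw_byWitness[where f' = g]) (use assms in auto)

lemma sum_Pow_parity:
  fixes T v :: "nat set"
  assumes "finite T" and "finite v"
  shows "(\<Sum>x\<in>Pow T. (-1::int) ^ card (x \<inter> v)) = (if T \<inter> v = {} then 2 ^ card T else 0)"
proof (cases "T \<inter> v = {}")
  case True
  then have "x \<inter> v = {}" if "x \<in> Pow T" for x
    using that by blast
  then have "(\<Sum>x\<in>Pow T. (-1::int) ^ card (x \<inter> v)) = (\<Sum>x\<in>Pow T. 1)"
    by (intro sum.cong) auto
  then show ?thesis using True assms by (simp add: card_Pow)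
next
  case False
  then obtain t where t: "t \<in> T" "t \<in> v" by auto
  have "(\<Sum>x\<in>Pow T. (-1::int) ^ card (x \<inter> v)) = 0"
  proof (rule sum_sign_reversing_involution)
    show "bij_betw (\<lambda>x. vadd x {t}) (Pow T) (Pow T)"
      using t by (intro involution_bij_betw) (auto simp: vadd_def)
    fix x assume "x \<in> Pow T"
    then have "finite x" using assms(1) finite_subset by auto
    then have "(-1::int) ^ card (v \<inter> vadd x {t}) = (-1) ^ card (v \<inter> x) * (-1) ^ card (v \<inter> {t})"
      by (intro parity_vadd) auto
    moreover have "v \<inter> {t} = {t}" using t by auto
    ultimately show "(-1::int) ^ card (vadd x {t} \<inter> v) = - ((-1) ^ card (x \<inter> v))"
      by (simp add: Int_commute)
  qed
  then show ?thesis using False by simp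
qed

lemma sum_code_parity:
  assumes lin: "linear_code n C" and "finite x"
  shows "(\<Sum>c\<in>C. (-1::int) ^ card (x \<inter> c)) = (if \<forall>c\<in>C. orth x c then int (card C) else 0)"
proof (cases "\<forall>c\<in>C. orth x c")
  case True
  then have "(\<Sum>c\<in>C. (-1::int) ^ card (x \<inter> c)) = (\<Sum>c\<in>C. 1)"
    by (intro sum.cong) (auto simp: orth_def)
  then show ?thesis using True by simp
next
  case False
  then obtain c0 where c0: "c0 \<in> C" "\<not> orth x c0" by auto
  have "(\<Sum>c\<in>C. (-1::int) ^ card (x \<inter> c)) = 0"
  proof (rule sum_sign_reversing_involution)
    show "bij_betw (vadd c0) C C"
      using lin c0 by (intro involution_bij_betw) (auto simp: linear_code_def vadd_def)
    fix c assume "c \<in> C"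
    then have "finite c" "finite c0"
      using lin c0 finite_word by (auto simp: linear_code_def)
    then show "(-1::int) ^ card (x \<inter> vadd c0 c) = - ((-1) ^ card (x \<inter> c))"
      using parity_vadd c0(2) by (simp add: orth_def)
  qed
  then show ?thesis using False by (subst if_not_P) auto
qed

text \<open>A subset form of the MacWilliams identity, obtained by evaluating
  \<open>\<Sum>x\<subseteq>T. \<Sum>c\<in>C. (-1)^|x \<inter> c|\<close> in both orders.\<close>

lemma macwilliams_subset_count:
  assumes lin: "linear_code n C" and T: "T \<subseteq> {..<n}"
  shows "card {c\<in>C. T \<inter> c = {}} * 2 ^ card T = card C * card {x\<in>dual_code n C. x \<subseteq> T}"
proof -
  have Cw: "C \<subseteq> words n" using lin by (simp add: linear_code_def)
  have "finite C" using Cw finite_words finite_subset by auto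
  have "finite T" using T finite_subset by auto
  let ?S = "\<Sum>x\<in>Pow T. \<Sum>c\<in>C. (-1::int) ^ card (x \<inter> c)"
  have "?S = (\<Sum>x\<in>Pow T. if x \<in> dual_code n C then int (card C) else 0)"
  proof (intro sum.cong refl)
    fix x assume x: "x \<in> Pow T"
    then have "x \<in> words n" "finite x" using T \<open>finite T\<close> finite_subset by (auto simp: words_def)
    then show "(\<Sum>c\<in>C. (-1::int) ^ card (x \<inter> c)) = (if x \<in> dual_code n C then int (card C) else 0)"
      using sum_code_parity[OF lin] by (simp add: dual_code_def)
  qed
  also have "\<dots> = int (card C) * int (card {x\<in>dual_code n C. x \<subseteq> T})"
    using \<open>finite T\<close> by (simp add: sum.If_cases Int_def conj_commute)
  finally have rows: "?S = int (card C) * int (card {x\<in>dual_code n C. x \<subseteq> T})" .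
  have "?S = (\<Sum>c\<in>C. \<Sum>x\<in>Pow T. (-1::int) ^ card (x \<inter> c))" by (rule sum.swap)
  also have "\<dots> = (\<Sum>c\<in>C. if T \<inter> c = {} then 2 ^ card T else 0)"
    using sum_Pow_parity[OF \<open>finite T\<close>] Cw finite_word by (intro sum.cong refl) blast
  also have "\<dots> = 2 ^ card T * int (card {c\<in>C. T \<inter> c = {}})"
    using \<open>finite C\<close> by (simp add: sum.If_cases Int_def conj_commute)
  finally have "int (card {c\<in>C. T \<inter> c = {}} * 2 ^ card T) = int (card C * card {x\<in>dual_code n C. x \<subseteq> T})"
    using rows by (simp add: mult.commute)
  then show ?thesis by (simp only: of_nat_eq_iff)
qed

lemma card_subsets_containing:
  assumes "finite A" and "i \<in> A"
  shows "card {T. T \<subseteq> A \<and> i \<in> T \<and> card T = Suc k} = (card A - 1) choose k"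
proof -
  have "bij_betw (insert i) {S. S \<subseteq> A - {i} \<and> card S = k} {T. T \<subseteq> A \<and> i \<in> T \<and> card T = Suc k}"
  proof (rule bij_betw_byWitness[where f' = "\<lambda>T. T - {i}"])
    show "(\<lambda>T. T - {i}) ` {T. T \<subseteq> A \<and> i \<in> T \<and> card T = Suc k} \<subseteq> {S. S \<subseteq> A - {i} \<and> card S = k}"
      using assms finite_subset by fastforce
    show "insert i ` {S. S \<subseteq> A - {i} \<and> card S = k} \<subseteq> {T. T \<subseteq> A \<and> i \<in> T \<and> card T = Suc k}"
      using assms finite_subset by (fastforce simp: card_insert_if)
  qed auto
  then have "card {T. T \<subseteq> A \<and> i \<in> T \<and> card T = Suc k} = card {S. S \<subseteq> A - {i} \<and> card S = k}"
    by (simp add: bij_betw_same_card)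
  also have "\<dots> = (card A - 1) choose k"
    using assms by (simp add: n_subsets)
  finally show ?thesis .
qed

lemma sum_card_eq_sum_weight_enum:
  assumes "finite A" and "finite W" and "card ` A \<subseteq> W"
  shows "(\<Sum>c\<in>A. g (card c)) = (\<Sum>w\<in>W. weight_enum A w * g w)"
proof -
  have "(\<Sum>c\<in>A. g (card c)) = (\<Sum>w\<in>W. \<Sum>c\<in>{c\<in>A. card c = w}. g (card c))"
    using sum.group[OF assms, of "\<lambda>c. g (card c)"] by (simp add: conj_commute)
  also have "\<dots> = (\<Sum>w\<in>W. weight_enum A w * g w)"
    by (intro sum.cong refl) (simp add: weight_enum_def wt_def)
  finally show ?thesis .
qed

definition subsets_through :: "nat \<Rightarrow> nat \<Rightarrow> nat \<Rightarrow> nat set set" where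
  "subsets_through n i k = {T. T \<subseteq> {..<n} \<and> i \<in> T \<and> card T = k}"

lemma finite_subsets_through: "finite (subsets_through n i k)"
  unfolding subsets_through_def by (rule finite_subset[of _ "Pow {..<n}"]) auto

locale self_dual_code =
  fixes n :: nat and C :: "nat set set"
  assumes self_dual: "self_dual n C"
begin

lemma linear: "linear_code n C"
  using self_dual by (simp add: self_dual_def)

lemma code_eq_dual: "C = dual_code n C"
  using self_dual by (simp add: self_dual_def)

lemma codeword_subset: "c \<in> C \<Longrightarrow> c \<subseteq> {..<n}"
  using linear by (auto simp: linear_code_def words_def)

lemma finite_code: "finite C"
  using linear finite_words finite_subset by (auto simp: linear_code_def)

lemma finite_codeword: "c \<in> C \<Longrightarrow> finite c"
  using codeword_subset finite_subset by blast

lemma empty_in_code: "{} \<in> C"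
  using linear by (simp add: linear_code_def)

lemma vadd_in_code: "x \<in> C \<Longrightarrow> y \<in> C \<Longrightarrow> vadd x y \<in> C"
  using linear by (simp add: linear_code_def)

lemma orth_codewords: "x \<in> C \<Longrightarrow> y \<in> C \<Longrightarrow> orth x y"
  using code_eq_dual by (metis (no_types, lifting) dual_code_def mem_Collect_eq)

lemma even_card_codeword: "c \<in> C \<Longrightarrow> even (card c)"
  using orth_codewords[of c c] by (simp add: orth_def)

lemma all_ones_in_code: "{..<n} \<in> C"
proof -
  have "{..<n} \<in> dual_code n C"
    using codeword_subset even_card_codeword by (auto simp: dual_code_def words_def orth_def Int_absorb1)
  then show ?thesis using code_eq_dual by simp
qed

lemma complement_in_code: "c \<in> C \<Longrightarrow> {..<n} - c \<in> C"
  using vadd_in_code[OF all_ones_in_code] codeword_subset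
  by (metis Diff_empty Un_empty_right Diff_eq_empty_iff vadd_def)

lemma card_complement: "c \<in> C \<Longrightarrow> card ({..<n} - c) = n - card c"
  using codeword_subset by (simp add: card_Diff_subset finite_codeword)

lemma card_codeword_le: "c \<in> C \<Longrightarrow> card c \<le> n"
  using codeword_subset card_mono[of "{..<n}" c] by simp

lemma weight_enum_beyond_length:
  assumes "n < w"
  shows "weight_enum C w = 0"
proof -
  have "{c\<in>C. wt c = w} = {}"
    using card_codeword_le assms by (fastforce simp: wt_def)
  then show ?thesis unfolding weight_enum_def by (metis card.empty)
qed

lemma card_containing_eq_card_avoiding:
  assumes "i < n" and "w \<le> n"
  shows "card {c\<in>C. i \<in> c \<and> card c = w} = card {c\<in>C. i \<notin> c \<and> card c = n - w}"
proof -
  have "bij_betw (\<lambda>c. {..<n} - c) {c\<in>C. i \<in> c \<and> card c = w} {c\<in>C. i \<notin> c \<and> card c = n - w}"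
  proof (rule bij_betw_byWitness[where f' = "\<lambda>c. {..<n} - c"])
    show "(\<lambda>c. {..<n} - c) ` {c\<in>C. i \<in> c \<and> card c = w} \<subseteq> {c\<in>C. i \<notin> c \<and> card c = n - w}"
      using complement_in_code card_complement by auto
    show "(\<lambda>c. {..<n} - c) ` {c\<in>C. i \<notin> c \<and> card c = n - w} \<subseteq> {c\<in>C. i \<in> c \<and> card c = w}"
      using complement_in_code card_complement assms by auto
  qed (use codeword_subset in auto)
  then show ?thesis by (rule bij_betw_same_card)
qed

lemma sum_card_disjoint_subsets_through:
  assumes "i < n"
  shows "(\<Sum>T\<in>subsets_through n i (Suc \<mu>). card {c\<in>C. T \<inter> c = {}}) =
    (\<Sum>c\<in>{c\<in>C. i \<notin> c}. (n - card c - 1) choose \<mu>)"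
proof -
  let ?F = "subsets_through n i (Suc \<mu>)"
  have "card {T\<in>?F. T \<inter> c = {}} = (if i \<notin> c then (n - card c - 1) choose \<mu> else 0)" if "c \<in> C" for c
  proof (cases "i \<in> c")
    case False
    have "{T\<in>?F. T \<inter> c = {}} = {T. T \<subseteq> {..<n} - c \<and> i \<in> T \<and> card T = Suc \<mu>}"
      unfolding subsets_through_def by auto
    then show ?thesis
      using card_subsets_containing[of "{..<n} - c" i \<mu>] False assms card_complement[OF that] by simp
  qed (auto simp: subsets_through_def)
  then have "(\<Sum>T\<in>?F. card {c\<in>C. T \<inter> c = {}}) = (\<Sum>c\<in>C. if i \<notin> c then (n - card c - 1) choose \<mu> else 0)"
    using sum_multicount_gen[OF finite_subsets_through finite_code, where R = "\<lambda>T c. T \<inter> c = {}"] by simp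
  also have "\<dots> = (\<Sum>c\<in>{c\<in>C. i \<notin> c}. (n - card c - 1) choose \<mu>)"
    by (rule sum.inter_filter[OF finite_code, symmetric])
  finally show ?thesis .
qed

text \<open>Below the minimum weight, a codeword inside a \<open>(\<mu>+1)\<close>-set \<open>T\<close> is either zero or \<open>T\<close> itself.\<close>

lemma sum_card_contained_subsets_through:
  assumes "i < n" and min_weight: "\<And>c. c \<in> C \<Longrightarrow> c \<noteq> {} \<Longrightarrow> Suc \<mu> \<le> card c"
  shows "(\<Sum>T\<in>subsets_through n i (Suc \<mu>). card {x\<in>C. x \<subseteq> T}) =
    ((n - 1) choose \<mu>) + card {c\<in>C. i \<in> c \<and> card c = Suc \<mu>}"
proof -
  let ?F = "subsets_through n i (Suc \<mu>)"
  have "card {T\<in>?F. x \<subseteq> T} = (if x = {} then (n - 1) choose \<mu> else if i \<in> x \<and> card x = Suc \<mu> then 1 else 0)"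
    if "x \<in> C" for x
  proof (cases "x = {}")
    case True
    then show ?thesis
      using card_subsets_containing[of "{..<n}" i \<mu>] assms(1) by (simp add: subsets_through_def)
  next
    case False
    have "T = x" if "T \<in> ?F" "x \<subseteq> T" for T
    proof -
      have "finite T" "card T = Suc \<mu>"
        using that(1) finite_subset by (auto simp: subsets_through_def)
      moreover have "Suc \<mu> \<le> card x"
        using min_weight \<open>x \<in> C\<close> False by blast
      ultimately show ?thesis
        using card_seteq[OF \<open>finite T\<close> \<open>x \<subseteq> T\<close>] by simp
    qed
    then have "{T\<in>?F. x \<subseteq> T} = (if i \<in> x \<and> card x = Suc \<mu> then {x} else {})"
      using codeword_subset[OF that] by (auto simp: subsets_through_def)
    then show ?thesis using False by simp
  qed
  then have "(\<Sum>T\<in>?F. card {x\<in>C. x \<subseteq> T}) =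
      (\<Sum>x\<in>C. if x = {} then (n - 1) choose \<mu> else if i \<in> x \<and> card x = Suc \<mu> then 1 else 0)"
    using sum_multicount_gen[OF finite_subsets_through finite_code, where R = "\<lambda>T x. x \<subseteq> T"] by simp
  also have "\<dots> = ((n - 1) choose \<mu>) + card {c\<in>C. i \<in> c \<and> card c = Suc \<mu>}"
  proof -
    have "{x\<in>C. x \<noteq> {} \<and> i \<in> x \<and> card x = Suc \<mu>} = {c\<in>C. i \<in> c \<and> card c = Suc \<mu>}"
      by auto
    then show ?thesis
      using finite_code empty_in_code
      by (simp add: sum.remove sum.If_cases Int_def conj_commute)
  qed
  finally show ?thesis .
qed

lemma moment_identity:
  assumes "i < n" and "\<And>c. c \<in> C \<Longrightarrow> c \<noteq> {} \<Longrightarrow> Suc \<mu> \<le> card c"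
  shows "2 ^ Suc \<mu> * (\<Sum>c\<in>{c\<in>C. i \<notin> c}. (n - card c - 1) choose \<mu>) =
    card C * (((n - 1) choose \<mu>) + card {c\<in>C. i \<in> c \<and> card c = Suc \<mu>})"
proof -
  have "card {c\<in>C. T \<inter> c = {}} * 2 ^ Suc \<mu> = card C * card {x\<in>C. x \<subseteq> T}"
    if "T \<in> subsets_through n i (Suc \<mu>)" for T
    using macwilliams_subset_count[OF linear, of T] code_eq_dual that by (simp add: subsets_through_def)
  then have "(\<Sum>T\<in>subsets_through n i (Suc \<mu>). card {c\<in>C. T \<inter> c = {}}) * 2 ^ Suc \<mu> =
      card C * (\<Sum>T\<in>subsets_through n i (Suc \<mu>). card {x\<in>C. x \<subseteq> T})"
    by (simp add: sum_distrib_right sum_distrib_left)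
  then show ?thesis
    using sum_card_disjoint_subsets_through sum_card_contained_subsets_through assms
    by (simp add: mult.commute)
qed

end

lemma binomial_times_diff:
  "real (a choose k) * (real a - b) =
     real (Suc k) * real (a choose Suc k) + (real k - b) * real (a choose k)"
proof -
  have "Suc k * (a choose Suc k) = (a - k) * (a choose k)"
    using Suc_times_binomial[of k "a - 1"] binomial_absorb_comp[of a k] by (cases a) simp_all
  then have "real (Suc k * (a choose Suc k)) = real ((a - k) * (a choose k))"
    by (simp only:)
  moreover have "real ((a - k) * (a choose k)) = (real a - real k) * real (a choose k)"
    by (cases "k \<le> a") (simp_all add: of_nat_diff)
  ultimately show ?thesis by (simp add: algebra_simps)
qed

lemma binomial_moments_times_prod:
  fixes z :: "nat \<Rightarrow> real" and a :: "nat \<Rightarrow> nat" and b :: "'b \<Rightarrow> real"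
  assumes moments: "\<And>\<nu>. \<nu> \<le> N \<Longrightarrow> (\<Sum>t\<in>I. z t * real (a t choose \<nu>)) = (if \<nu> = N then e else 0)"
    and "finite B" and "\<nu> + card B \<le> N"
  shows "(\<Sum>t\<in>I. z t * real (a t choose \<nu>) * (\<Prod>s\<in>B. real (a t) - b s)) =
    (if \<nu> + card B = N then fact N / fact \<nu> * e else 0)"
  using assms(2,3)
proof (induction B arbitrary: \<nu> rule: finite_induct)
  case empty
  then show ?case using moments[of \<nu>] by simp
next
  case (insert s B)
  let ?M = "\<lambda>\<nu>. \<Sum>t\<in>I. z t * real (a t choose \<nu>) * (\<Prod>s\<in>B. real (a t) - b s)"
  have "(\<Sum>t\<in>I. z t * real (a t choose \<nu>) * (\<Prod>s\<in>insert s B. real (a t) - b s)) =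
      (\<Sum>t\<in>I. real (Suc \<nu>) * (z t * real (a t choose Suc \<nu>) * (\<Prod>s\<in>B. real (a t) - b s))
        + (real \<nu> - b s) * (z t * real (a t choose \<nu>) * (\<Prod>s\<in>B. real (a t) - b s)))"
  proof (intro sum.cong refl)
    fix t
    have "z t * real (a t choose \<nu>) * (\<Prod>s\<in>insert s B. real (a t) - b s) =
        z t * (real (a t choose \<nu>) * (real (a t) - b s)) * (\<Prod>s\<in>B. real (a t) - b s)"
      using insert.hyps by (simp add: ac_simps)
    also have "\<dots> = z t * (real (Suc \<nu>) * real (a t choose Suc \<nu>) + (real \<nu> - b s) * real (a t choose \<nu>))
        * (\<Prod>s\<in>B. real (a t) - b s)"
      by (simp only: binomial_times_diff)
    finally show "z t * real (a t choose \<nu>) * (\<Prod>s\<in>insert s B. real (a t) - b s) =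
        real (Suc \<nu>) * (z t * real (a t choose Suc \<nu>) * (\<Prod>s\<in>B. real (a t) - b s))
        + (real \<nu> - b s) * (z t * real (a t choose \<nu>) * (\<Prod>s\<in>B. real (a t) - b s))"
      by (simp add: algebra_simps)
  qed
  also have "\<dots> = real (Suc \<nu>) * ?M (Suc \<nu>) + (real \<nu> - b s) * ?M \<nu>"
    by (simp add: sum.distrib sum_distrib_left)
  also have "\<dots> = (if \<nu> + card (insert s B) = N then fact N / fact \<nu> * e else 0)"
  proof -
    have "real (Suc \<nu>) * (fact N / fact (Suc \<nu>)) = fact N / fact \<nu>"
      by (simp add: fact_Suc del: of_nat_Suc)
    then show ?thesis
      using insert.IH[of \<nu>] insert.IH[of "Suc \<nu>"] insert.prems insert.hyps
      by (simp add: ac_simps)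
  qed
  finally show ?case .
qed

lemma binomial_moment_system_zero:
  fixes z :: "nat \<Rightarrow> real" and a :: "nat \<Rightarrow> nat" and c :: real
  assumes moments: "\<And>\<nu>. \<nu> \<le> N \<Longrightarrow> (\<Sum>t\<le>N. z t * real (a t choose \<nu>)) = (if \<nu> = N then c * z N else 0)"
    and inj: "inj_on a {..N}"
    and nondegenerate: "(\<Prod>s<N. real (a N) - real (a s)) \<noteq> c * fact N"
    and "t \<le> N"
  shows "z t = 0"
proof -
  \<comment> \<open>pairing with the Lagrange polynomial \<open>\<Prod>s\<noteq>t. (X - a s)\<close> isolates \<open>z t\<close>\<close>
  have lagrange: "z t * (\<Prod>s\<in>{..N} - {t}. real (a t) - real (a s)) = fact N * e"
    if "t \<le> N" and moments_e: "\<And>\<nu>. \<nu> \<le> N \<Longrightarrow> (\<Sum>t\<le>N. z t * real (a t choose \<nu>)) = (if \<nu> = N then e else 0)"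
    for t e
  proof -
    have "(\<Sum>t'\<le>N. z t' * real (a t' choose 0) * (\<Prod>s\<in>{..N} - {t}. real (a t') - real (a s))) = fact N * e"
      using binomial_moments_times_prod[OF moments_e, of "{..N} - {t}" 0] \<open>t \<le> N\<close> by simp
    moreover have "(\<Sum>t'\<le>N. z t' * real (a t' choose 0) * (\<Prod>s\<in>{..N} - {t}. real (a t') - real (a s)))
        = z t * (\<Prod>s\<in>{..N} - {t}. real (a t) - real (a s))"
      using \<open>t \<le> N\<close> by (subst sum.remove[of _ t]) (auto intro!: sum.neutral prod_zero)
    ultimately show ?thesis by simp
  qed
  have "{..N} - {N} = {..<N}" by auto
  then have "z N * (\<Prod>s<N. real (a N) - real (a s)) = z N * (c * fact N)"
    using lagrange[OF order.refl moments] by (simp add: ac_simps)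
  then have "z N = 0" using nondegenerate by simp
  then have "z t * (\<Prod>s\<in>{..N} - {t}. real (a t) - real (a s)) = 0"
    using lagrange[OF \<open>t \<le> N\<close>, of 0] moments by simp
  moreover have "(\<Prod>s\<in>{..N} - {t}. real (a t) - real (a s)) \<noteq> 0"
    using inj \<open>t \<le> N\<close> by (auto simp: inj_on_def)
  ultimately show ?thesis by simp
qed

lemma prod_neg_odd_card:
  fixes f :: "'b \<Rightarrow> 'a :: linordered_idom"
  assumes "\<And>s. s \<in> A \<Longrightarrow> f s < 0" and "odd (card A)"
  shows "prod f A < 0"
proof -
  have "prod f A = (-1) ^ card A * (\<Prod>s\<in>A. - f s)"
    using prod_uminus[of "\<lambda>s. - f s" A] by simp
  moreover have "0 < (\<Prod>s\<in>A. - f s)"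
    using assms(1) by (intro prod_pos) simp
  ultimately show ?thesis using assms(2) by simp
qed

lemma extremal_moment_system_unique:
  fixes m :: nat and b x y :: "nat \<Rightarrow> nat"
  assumes x: "\<And>\<mu>. \<mu> \<le> 4*m+1 \<Longrightarrow> 2 ^ Suc \<mu> * (b \<mu> + (\<Sum>t\<le>4*m+1. x t * (20*m+5-4*t choose \<mu>))) =
      2 ^ (12*m+5) * (b \<mu> + (if \<mu> = 4*m+1 then x (4*m+1) else 0))"
    and y: "\<And>\<mu>. \<mu> \<le> 4*m+1 \<Longrightarrow> 2 ^ Suc \<mu> * (b \<mu> + (\<Sum>t\<le>4*m+1. y t * (20*m+5-4*t choose \<mu>))) =
      2 ^ (12*m+5) * (b \<mu> + (if \<mu> = 4*m+1 then y (4*m+1) else 0))"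
    and "t \<le> 4*m+1"
  shows "x t = y t"
proof -
  define N where "N = 4*m+1"
  define a where "a t = 20*m+5-4*t" for t
  define z where "z t = real (x t) - real (y t)" for t
  have moments: "(\<Sum>t\<le>N. z t * real (a t choose \<nu>)) = (if \<nu> = N then 2 ^ (8*m+3) * z N else 0)"
    if "\<nu> \<le> N" for \<nu>
  proof -
    have "(2::real) ^ Suc \<nu> * (\<Sum>t\<le>N. z t * real (a t choose \<nu>)) =
        2 ^ Suc \<nu> * (real (b \<nu>) + (\<Sum>t\<le>N. real (x t) * real (a t choose \<nu>)))
        - 2 ^ Suc \<nu> * (real (b \<nu>) + (\<Sum>t\<le>N. real (y t) * real (a t choose \<nu>)))"
      by (simp add: z_def algebra_simps sum_subtractf)
    also have "\<dots> = 2 ^ (12*m+5) * (if \<nu> = N then z N else 0)"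
      using arg_cong[OF x[of \<nu>], of real] arg_cong[OF y[of \<nu>], of real] that
      by (simp add: N_def a_def z_def algebra_simps)
    also have "\<dots> = 2 ^ Suc \<nu> * (if \<nu> = N then 2 ^ (8*m+3) * z N else 0)"
    proof -
      have "12*m+5 = Suc N + (8*m+3)"
        by (simp add: N_def)
      then have "(2::real) ^ (12*m+5) = 2 ^ Suc N * 2 ^ (8*m+3)"
        by (simp only: power_add)
      then show ?thesis by simp
    qed
    finally show ?thesis by simp
  qed
  have "inj_on a {..N}"
    by (auto simp: inj_on_def a_def N_def)
  moreover have "(\<Prod>s<N. real (a N) - real (a s)) \<noteq> 2 ^ (8*m+3) * fact N"
  proof -
    have "(\<Prod>s<N. real (a N) - real (a s)) < 0"
      by (rule prod_neg_odd_card) (auto simp: a_def N_def)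
    moreover have "0 < (2::real) ^ (8*m+3) * fact N"
      by simp
    ultimately show ?thesis by linarith
  qed
  ultimately have "z t = 0"
    using binomial_moment_system_zero[OF moments] \<open>t \<le> 4*m+1\<close> N_def by blast
  then show ?thesis by (simp add: z_def)
qed

lemma even_mod_4_eq_2: "even (k::nat) \<Longrightarrow> k mod 4 \<noteq> 0 \<Longrightarrow> k mod 4 = 2"
  by presburger

lemma mod_4_eq_0_of_twos:
  fixes a p x y :: nat
  assumes "a + 2 * p = x + y" and "even p" and "x mod 4 = 2" and "y mod 4 = 2"
  shows "a mod 4 = 0"
proof -
  obtain q where "p = 2 * q" using \<open>even p\<close> by blast
  then have "a mod 4 = (a + 4 * q) mod 4" by simp
  also have "\<dots> = (x mod 4 + y mod 4) mod 4"
    using assms(1) \<open>p = 2 * q\<close> by (simp add: mod_add_eq)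
  finally show ?thesis using assms(3,4) by simp
qed

locale singleton_shadow = self_dual_code +
  fixes i :: nat
  assumes singleton_in_shadow: "{i} \<in> shadow n C"
begin

lemma coordinate_less: "i < n"
  using singleton_in_shadow by (auto simp: shadow_def dual_code_def words_def)

lemma doubly_even_not_mem: "c \<in> C \<Longrightarrow> card c mod 4 = 0 \<Longrightarrow> i \<notin> c"
  using singleton_in_shadow
  by (auto simp: shadow_def dual_code_def doubly_even_subcode_def wt_def orth_def)

lemma not_mem_iff_doubly_even:
  assumes "c \<in> C"
  shows "i \<notin> c \<longleftrightarrow> card c mod 4 = 0"
proof
  assume "i \<notin> c"
  show "card c mod 4 = 0"
  proof (rule ccontr)
    assume "card c mod 4 \<noteq> 0"
    then have c2: "card c mod 4 = 2"
      using even_card_codeword[OF assms] by (rule even_mod_4_eq_2[rotated])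
    have "i \<notin> x" if x: "x \<in> C" for x
    proof (cases "card x mod 4 = 0")
      case False
      then have x2: "card x mod 4 = 2"
        using even_card_codeword[OF x] by (rule even_mod_4_eq_2[rotated])
      have "even (card (x \<inter> c))"
        using orth_codewords[OF x assms] by (simp add: orth_def)
      then have "card (vadd x c) mod 4 = 0"
        by (rule mod_4_eq_0_of_twos[OF card_vadd[OF finite_codeword[OF x] finite_codeword[OF assms]] _ x2 c2])
      then have "i \<notin> vadd x c"
        by (rule doubly_even_not_mem[OF vadd_in_code[OF x assms]])
      then show ?thesis using \<open>i \<notin> c\<close> by (auto simp: vadd_def)
    qed (rule doubly_even_not_mem[OF x])
    then have "{i} \<in> dual_code n C"
      using coordinate_less by (auto simp: dual_code_def words_def orth_def)
    then have "{i} \<in> C"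
      using code_eq_dual by blast
    then show False
      using singleton_in_shadow by (simp add: shadow_def)
  qed
qed (rule doubly_even_not_mem[OF assms])

lemma doubly_even_subcode_eq: "doubly_even_subcode C = {c\<in>C. i \<notin> c}"
  unfolding doubly_even_subcode_def wt_def
  by (rule Collect_cong) (metis not_mem_iff_doubly_even)

lemma weight_enum_doubly_even_subcode:
  "weight_enum (doubly_even_subcode C) w = card {c\<in>C. i \<notin> c \<and> card c = w}"
  unfolding weight_enum_def doubly_even_subcode_eq wt_def
  by (rule arg_cong[where f = card]) blast

lemma weight_enum_by_doubly_even_subcode:
  "weight_enum C w =
    (if w \<le> n then weight_enum (doubly_even_subcode C) w + weight_enum (doubly_even_subcode C) (n - w) else 0)"
proof (cases "w \<le> n")
  case True
  have "{c\<in>C. wt c = w} = {c\<in>C. i \<notin> c \<and> card c = w} \<union> {c\<in>C. i \<in> c \<and> card c = w}"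
    by (auto simp: wt_def)
  then have "weight_enum C w = card {c\<in>C. i \<notin> c \<and> card c = w} + card {c\<in>C. i \<in> c \<and> card c = w}"
    unfolding weight_enum_def using finite_code by (simp add: card_Un_disjoint disjoint_iff)
  then show ?thesis
    using True card_containing_eq_card_avoiding[OF coordinate_less True]
    by (simp add: weight_enum_doubly_even_subcode)
qed (simp add: weight_enum_beyond_length)

end

locale extremal_singleton_shadow = singleton_shadow "24*m+10" C i for m :: nat and C i +
  assumes card_code: "card C = 2 ^ (12*m+5)"
    and min_weight: "\<And>c. c \<in> C \<Longrightarrow> c \<noteq> {} \<Longrightarrow> 4*m+2 \<le> card c"
begin

lemma doubly_even_weight_cases:
  assumes "c \<in> C" and "i \<notin> c" and "c \<noteq> {}"
  shows "\<exists>t\<le>4*m+1. card c = 4*m+4+4*t"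
proof -
  have "card c mod 4 = 0" and "4*m+2 \<le> card c"
    using assms not_mem_iff_doubly_even min_weight by auto
  moreover have "4*m+2 \<le> card ({..<24*m+10} - c)"
    using assms coordinate_less complement_in_code min_weight by blast
  then have "card c \<le> 20*m+8"
    using card_complement[OF \<open>c \<in> C\<close>] by simp
  moreover obtain j where "card c = 4 * j"
    using \<open>card c mod 4 = 0\<close> by (auto elim!: dvdE)
  ultimately have "card c = 4*m+4+4*(j - m - 1)" and "j - m - 1 \<le> 4*m+1"
    by linarith+
  then show ?thesis by blast
qed

lemma weight_enum_doubly_even_subcode_0: "weight_enum (doubly_even_subcode C) 0 = 1"
proof -
  have "{c\<in>C. i \<notin> c \<and> card c = 0} = {{}}"
    using empty_in_code finite_codeword by auto
  then show ?thesis by (simp add: weight_enum_doubly_even_subcode)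
qed

lemma weight_enum_doubly_even_subcode_eq_0:
  assumes "w \<noteq> 0" and "\<forall>t\<le>4*m+1. w \<noteq> 4*m+4+4*t"
  shows "weight_enum (doubly_even_subcode C) w = 0"
proof -
  have "{c\<in>C. i \<notin> c \<and> card c = w} = {}"
    using doubly_even_weight_cases assms by fastforce
  then show ?thesis unfolding weight_enum_doubly_even_subcode by (metis card.empty)
qed

lemma sum_doubly_even_subcode_by_weight:
  "(\<Sum>c\<in>doubly_even_subcode C. g (card c)) =
    g 0 + (\<Sum>t\<le>4*m+1. weight_enum (doubly_even_subcode C) (4*m+4+4*t) * g (4*m+4+4*t))"
proof -
  let ?E = "weight_enum (doubly_even_subcode C)"
  let ?W = "insert 0 ((\<lambda>t. 4*m+4+4*t) ` {..4*m+1})"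
  have "card ` doubly_even_subcode C \<subseteq> ?W"
  proof
    fix w assume "w \<in> card ` doubly_even_subcode C"
    then obtain c where "c \<in> C" "i \<notin> c" "w = card c"
      by (auto simp: doubly_even_subcode_eq)
    then show "w \<in> ?W"
      using doubly_even_weight_cases[of c] by (cases "c = {}") auto
  qed
  then have "(\<Sum>c\<in>doubly_even_subcode C. g (card c)) = (\<Sum>w\<in>?W. ?E w * g w)"
    using finite_code by (intro sum_card_eq_sum_weight_enum) (simp_all add: doubly_even_subcode_eq)
  also have "\<dots> = ?E 0 * g 0 + (\<Sum>w\<in>(\<lambda>t. 4*m+4+4*t) ` {..4*m+1}. ?E w * g w)"
    by (subst sum.insert) auto
  also have "\<dots> = g 0 + (\<Sum>t\<le>4*m+1. ?E (4*m+4+4*t) * g (4*m+4+4*t))"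
    by (simp add: sum.reindex inj_on_def weight_enum_doubly_even_subcode_0)
  finally show ?thesis .
qed

lemma card_weight_through_coordinate:
  assumes "\<mu> \<le> 4*m+1"
  shows "card {c\<in>C. i \<in> c \<and> card c = Suc \<mu>} =
    (if \<mu> = 4*m+1 then weight_enum (doubly_even_subcode C) (20*m+8) else 0)"
proof -
  have "card {c\<in>C. i \<in> c \<and> card c = Suc \<mu>} = weight_enum (doubly_even_subcode C) (24*m+10 - Suc \<mu>)"
    using card_containing_eq_card_avoiding[OF coordinate_less] assms
    by (simp add: weight_enum_doubly_even_subcode)
  moreover have "weight_enum (doubly_even_subcode C) (24*m+10 - Suc \<mu>) = 0" if "\<mu> \<noteq> 4*m+1"
  proof -
    have "20*m+8 < 24*m+10 - Suc \<mu>"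
      using assms that by linarith
    then show ?thesis
      by (intro weight_enum_doubly_even_subcode_eq_0) auto
  qed
  ultimately show ?thesis
    by (simp add: add.commute)
qed

text \<open>The weight \<open>w = 4m+4+4t\<close> enters through \<open>n - w - 1 = 20m+5-4t\<close>.\<close>

lemma moment_equation:
  assumes "\<mu> \<le> 4*m+1"
  shows "2 ^ Suc \<mu> * ((24*m+9 choose \<mu>) +
      (\<Sum>t\<le>4*m+1. weight_enum (doubly_even_subcode C) (4*m+4+4*t) * (20*m+5-4*t choose \<mu>))) =
    2 ^ (12*m+5) * ((24*m+9 choose \<mu>) +
      (if \<mu> = 4*m+1 then weight_enum (doubly_even_subcode C) (20*m+8) else 0))"
proof -
  have "Suc \<mu> \<le> card c" if "c \<in> C" "c \<noteq> {}" for c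
    using min_weight[OF that] assms by linarith
  then have "2 ^ Suc \<mu> * (\<Sum>c\<in>doubly_even_subcode C. (24*m+10 - card c - 1) choose \<mu>) =
      card C * ((24*m+9 choose \<mu>) + card {c\<in>C. i \<in> c \<and> card c = Suc \<mu>})"
    using moment_identity[OF coordinate_less, of \<mu>] by (simp add: doubly_even_subcode_eq add.commute)
  moreover have "(\<Sum>t\<le>4*m+1. weight_enum (doubly_even_subcode C) (4*m+4+4*t) * (24*m+10 - (4*m+4+4*t) - 1 choose \<mu>)) =
      (\<Sum>t\<le>4*m+1. weight_enum (doubly_even_subcode C) (4*m+4+4*t) * (20*m+5-4*t choose \<mu>))"
    by (intro sum.cong refl) (simp add: add.commute)
  ultimately show ?thesis
    using sum_doubly_even_subcode_by_weight[of "\<lambda>w. 24*m+10 - w - 1 choose \<mu>"]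
      card_weight_through_coordinate[OF assms] card_code
    by (simp add: add.commute)
qed

end

lemma min_weight_le_card:
  assumes "is_nkd_code n k d C" and "c \<in> C" and "c \<noteq> {}"
  shows "d \<le> card c"
proof -
  have "finite C"
    using assms(1) finite_words finite_subset by (auto simp: is_nkd_code_def linear_code_def)
  then have "Min (wt ` (C - {{}})) \<le> wt c"
    using assms(2,3) by (intro Min_le) auto
  then show ?thesis
    using assms(1) by (simp add: is_nkd_code_def min_weight_def wt_def)
qed

lemma minimal_shadow_singleton:
  assumes "minimal_shadow n C"
  obtains i where "{i} \<in> shadow n C"
proof -
  have "finite (shadow n C)"
    unfolding shadow_def dual_code_def using finite_words by (rule finite_subset[rotated]) auto
  then have "min_wt_set (shadow n C) \<in> wt ` shadow n C"
    using assms unfolding minimal_shadow_def min_wt_set_def by (intro Min_in) auto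
  then obtain s where "s \<in> shadow n C" "wt s = min_wt_set (shadow n C)"
    by auto
  moreover have "min_wt_set (shadow n C) = 1"
    using assms by (simp add: minimal_shadow_def)
  ultimately show ?thesis
    using that by (metis card_1_singletonE wt_def)
qed

lemma extremal_singleton_shadowI:
  assumes "is_nkd_code (24*m+10) (12*m+5) (4*m+2) C"
    and "self_dual (24*m+10) C" and "minimal_shadow (24*m+10) C"
  obtains i where "extremal_singleton_shadow m C i"
proof -
  obtain i where "{i} \<in> shadow (24*m+10) C"
    using minimal_shadow_singleton[OF assms(3)] .
  then have "extremal_singleton_shadow m C i"
    using assms(1,2) min_weight_le_card[OF assms(1)]
    by unfold_locales (auto simp: is_nkd_code_def code_dim_def)
  then show ?thesis by (rule that)
qed

theorem mainTheorem4:
  fixes m :: nat and C D :: "nat set set"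
  assumes "is_nkd_code (24*m+10) (12*m+5) (4*m+2) C"
      and "self_dual (24*m+10) C" and "singly_even C" and "minimal_shadow (24*m+10) C"
      and "is_nkd_code (24*m+10) (12*m+5) (4*m+2) D"
      and "self_dual (24*m+10) D" and "singly_even D" and "minimal_shadow (24*m+10) D"
  shows "weight_enum C = weight_enum D"
proof -
  obtain i where "extremal_singleton_shadow m C i"
    using extremal_singleton_shadowI[OF assms(1,2,4)] .
  then interpret C: extremal_singleton_shadow m C i .
  obtain j where "extremal_singleton_shadow m D j"
    using extremal_singleton_shadowI[OF assms(5,6,8)] .
  then interpret D: extremal_singleton_shadow m D j .
  let ?E = "weight_enum (doubly_even_subcode C)" and ?F = "weight_enum (doubly_even_subcode D)"
  have last_weight: "4*m+4+4*(4*m+1) = 20*m+8"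
    by simp
  have "?E (4*m+4+4*t) = ?F (4*m+4+4*t)" if "t \<le> 4*m+1" for t
    by (rule extremal_moment_system_unique[where b = "\<lambda>\<mu>. 24*m+9 choose \<mu>"
          and x = "\<lambda>t. ?E (4*m+4+4*t)" and y = "\<lambda>t. ?F (4*m+4+4*t)", OF _ _ that])
      (simp_all only: last_weight C.moment_equation D.moment_equation)
  then have "?E w = ?F w" for w
  proof (cases "w = 0 \<or> (\<exists>t\<le>4*m+1. w = 4*m+4+4*t)")
    case False
    then show ?thesis
      using C.weight_enum_doubly_even_subcode_eq_0 D.weight_enum_doubly_even_subcode_eq_0 by auto
  qed (auto simp: C.weight_enum_doubly_even_subcode_0 D.weight_enum_doubly_even_subcode_0)
  then show ?thesis
    by (simp add: fun_eq_iff C.weight_enum_by_doubly_even_subcode D.weight_enum_by_doubly_even_subcode)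
qed

end
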